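(* Let $q\ge 3$ be a prime power and $k$ a positive integer. Then there exists an $[n,k]_q$ MWS code for some positive integer $n$.
   Context: An $[n,k]_q$ code is a $k$-dimensional $\mathbb{F}_q$-linear subspace $\mathcal{C}$ of $\mathbb{F}_q^n$ with the Hamming weight $w(c)=|\{i: c_i\neq 0\}|$. Standing convention: codes of dimension $k\ge 2$ are non-degenerate, i.e. no coordinate position is identically zero on $\mathcal{C}$. The weight set is $w(\mathcal{C})=\{w(c): c\in\mathcal{C}\setminus\{0\}\}$, and $\theta_q(k-1)=\frac{q^k-1}{q-1}$. $\mathcal{C}$ is a maximum weight spectrum (MWS) code if $|w(\mathcal{C})|=\theta_q(k-1)$. *)

theory Defs
  imports Main "HOL.Vector_Spaces" "HOL-Library.Function_Algebras"
begin

text \<open>Vectors of F_q^n are represented as functions nat => 'a vanishing outside {0..<n};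
  the field F_q is a finite field type 'a with CARD('a) = q.\<close>

definition vscale :: "'a::field \<Rightarrow> (nat \<Rightarrow> 'a) \<Rightarrow> (nat \<Rightarrow> 'a)" where
  "vscale c v = (\<lambda>i. c * v i)"

definition ambient :: "nat \<Rightarrow> (nat \<Rightarrow> 'a::zero) set" where
  "ambient n = {v. \<forall>i\<ge>n. v i = 0}"

definition hweight :: "nat \<Rightarrow> (nat \<Rightarrow> 'a::zero) \<Rightarrow> nat" where
  "hweight n v = card {i. i < n \<and> v i \<noteq> 0}"

text \<open>An [n,k]_q code: k-dimensional linear subspace of F_q^n; for k >= 2 it is
  required to be non-degenerate (standing convention).\<close>
definition is_code :: "nat \<Rightarrow> nat \<Rightarrow> (nat \<Rightarrow> 'a::field) set \<Rightarrow> bool" where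
  "is_code n k C \<longleftrightarrow> C \<subseteq> ambient n \<and> module.subspace vscale C
     \<and> vector_space.dim vscale C = k
     \<and> (k \<ge> 2 \<longrightarrow> (\<forall>i<n. \<exists>c\<in>C. c i \<noteq> 0))"

definition weight_set :: "nat \<Rightarrow> (nat \<Rightarrow> 'a::zero) set \<Rightarrow> nat set" where
  "weight_set n C = hweight n ` (C - {0})"

definition theta :: "nat \<Rightarrow> nat \<Rightarrow> nat" where
  "theta q m = (q ^ (m + 1) - 1) div (q - 1)"

definition is_MWS :: "nat \<Rightarrow> nat \<Rightarrow> (nat \<Rightarrow> 'a::{field,finite}) set \<Rightarrow> bool" where
  "is_MWS n k C \<longleftrightarrow> is_code n k C \<and> card (weight_set n C) = theta (card (UNIV :: 'a set)) (k - 1)"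

end

theory Submission
  imports Defs "HOL-Library.Discrete_Functions" "HOL-Library.Nat_Bijection" "HOL-Library.FuncSet"
begin

(* Let g_0, ..., g_(N-1) list the nonzero vectors of F_q^k, and take the code with generator
   matrix whose column g_j is repeated 2^j times. The codeword of a message u has weight
   \<Sum>{2^j | <u, g_j> \<noteq> 0}, so by uniqueness of binary expansions two codewords have the
   same weight iff their messages are orthogonal to the same g_j, i.e. iff the messages are
   proportional. Hence the q^k - 1 nonzero codewords realise exactly (q^k - 1)/(q - 1) weights. *)

lemma vector_space_vscale: "vector_space (vscale :: 'a::field \<Rightarrow> (nat \<Rightarrow> 'a) \<Rightarrow> _)"
  by unfold_locales (auto simp: vscale_def fun_eq_iff algebra_simps)

lemma (in vector_space) dim_image_eq_if_inj_on:
  assumes lin: "Vector_Spaces.linear scale scale f" and V: "subspace V" and inj: "inj_on f V"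
  shows "dim (f ` V) = dim V"
proof -
  interpret f: Vector_Spaces.linear scale scale f by (fact lin)
  obtain B where B: "B \<subseteq> V" "independent B" "V \<subseteq> span B" "card B = dim V"
    using basis_exists by blast
  have span_B: "span B = V" using B V by (simp add: span_subspace)
  show ?thesis
  proof (rule dim_unique)
    show "f ` B \<subseteq> f ` V" using B(1) by blast
    show "f ` V \<subseteq> span (f ` B)" using f.span_image span_B by simp
    show "independent (f ` B)" using f.independent_injective_image B(2) inj span_B by simp
    show "card (f ` B) = dim V" using card_image[OF inj_on_subset[OF inj B(1)]] B(4) by simp
  qed
qed

lemma sum_apply: "(\<Sum>i\<in>A. f i) p = (\<Sum>i\<in>A. f i p)"
  by (induction A rule: infinite_finite_induct) auto

lemma subspace_ambient: "module.subspace vscale (ambient k :: (nat \<Rightarrow> 'a::field) set)"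
proof -
  interpret vector_space "vscale :: 'a \<Rightarrow> (nat \<Rightarrow> 'a) \<Rightarrow> _" by (rule vector_space_vscale)
  show ?thesis by (simp add: subspace_def ambient_def vscale_def)
qed

lemma ambient_nonzero_coord: "u \<in> ambient k \<Longrightarrow> u \<noteq> 0 \<Longrightarrow> \<exists>i<k. u i \<noteq> 0"
  by (auto simp: ambient_def fun_eq_iff) (metis not_le)

lemma ambient_eq_image_PiE:
  "ambient k = (\<lambda>f i. if i < k then f i else (0::'a::zero)) ` PiE {..<k} (\<lambda>_. UNIV)"
proof -
  have "v \<in> (\<lambda>f i. if i < k then f i else 0) ` PiE {..<k} (\<lambda>_. UNIV)" if "v \<in> ambient k"
    for v :: "nat \<Rightarrow> 'a"
    using that by (intro image_eqI[where x = "restrict v {..<k}"]) (auto simp: ambient_def fun_eq_iff)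
  then show ?thesis by (auto simp: ambient_def)
qed

lemma finite_ambient: "finite (ambient k :: (nat \<Rightarrow> 'a::{zero,finite}) set)"
  by (simp add: ambient_eq_image_PiE finite_PiE)

lemma card_ambient: "card (ambient k :: (nat \<Rightarrow> 'a::{zero,finite}) set) = card (UNIV :: 'a set) ^ k"
proof -
  have "inj_on (\<lambda>f i. if i < k then f i else (0::'a)) (PiE {..<k} (\<lambda>_. UNIV))"
    by (auto simp: inj_on_def fun_eq_iff PiE_def extensional_def) metis
  then show ?thesis by (simp add: ambient_eq_image_PiE card_image card_PiE)
qed

definition unit_vec :: "nat \<Rightarrow> nat \<Rightarrow> 'a::{zero,one}" where
  "unit_vec j = (\<lambda>i. if i = j then 1 else 0)"

lemma unit_vec_in_ambient: "j < k \<Longrightarrow> (unit_vec j :: nat \<Rightarrow> 'a::field) \<in> ambient k - {0}"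
proof -
  assume "j < k"
  then have "unit_vec j \<in> ambient k" by (simp add: ambient_def unit_vec_def)
  moreover have "unit_vec j j \<noteq> (0::'a)" by (simp add: unit_vec_def)
  then have "unit_vec j \<noteq> (0 :: nat \<Rightarrow> 'a)" by (metis zero_fun_def)
  ultimately show ?thesis by blast
qed

lemma dim_ambient: "vector_space.dim vscale (ambient k :: (nat \<Rightarrow> 'a::field) set) = k"
proof -
  interpret vector_space "vscale :: 'a \<Rightarrow> (nat \<Rightarrow> 'a) \<Rightarrow> _" by (rule vector_space_vscale)
  let ?E = "unit_vec ` {..<k} :: (nat \<Rightarrow> 'a) set"
  have inj: "inj_on (unit_vec :: nat \<Rightarrow> nat \<Rightarrow> 'a) {..<k}"
    by (auto simp: inj_on_def unit_vec_def fun_eq_iff split: if_splits)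
  show ?thesis
  proof (rule dim_unique)
    show "?E \<subseteq> ambient k" by (auto simp: unit_vec_def ambient_def)
    show "ambient k \<subseteq> span ?E"
    proof
      fix u :: "nat \<Rightarrow> 'a" assume "u \<in> ambient k"
      then have "u = (\<Sum>i<k. vscale (u i) (unit_vec i))"
        by (auto simp: fun_eq_iff sum_apply vscale_def unit_vec_def ambient_def
            if_distrib[of "(*) _"] cong: if_cong)
      also have "\<dots> \<in> span ?E"
        by (intro span_sum span_scale span_base) auto
      finally show "u \<in> span ?E" .
    qed
    show "independent ?E"
    proof (rule independent_if_scalars_zero)
      fix f and x :: "nat \<Rightarrow> 'a"
      assume sum0: "(\<Sum>x\<in>?E. vscale (f x) x) = 0" and "x \<in> ?E"
      then obtain i where i: "i < k" "x = unit_vec i" by blast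
      have "(\<Sum>x\<in>?E. vscale (f x) x) i = (\<Sum>j<k. f (unit_vec j) * unit_vec j i)"
        by (simp add: sum.reindex[OF inj] sum_apply vscale_def)
      also have "\<dots> = f x" using i by (simp add: unit_vec_def if_distrib[of "(*) _"] cong: if_cong)
      finally show "f x = 0" using sum0 by simp
    qed simp
    show "card ?E = k" using card_image[OF inj] by simp
  qed
qed

definition dotp :: "nat \<Rightarrow> (nat \<Rightarrow> 'a::field) \<Rightarrow> (nat \<Rightarrow> 'a) \<Rightarrow> 'a" where
  "dotp k u v = (\<Sum>i<k. u i * v i)"

lemma dotp_unit_vec_left: "j < k \<Longrightarrow> dotp k (unit_vec j) v = v j"
  by (simp add: dotp_def unit_vec_def if_distrib[of "\<lambda>x. x * _"] cong: if_cong)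

lemma dotp_unit_vec_right: "j < k \<Longrightarrow> dotp k u (unit_vec j) = u j"
  by (simp add: dotp_def unit_vec_def if_distrib[of "(*) _"] cong: if_cong)

lemma proportional_if_annihilator_subset:
  fixes u w :: "nat \<Rightarrow> 'a::field"
  assumes u: "u \<in> ambient k" "u \<noteq> 0" and w: "w \<in> ambient k"
    and ann: "\<And>v. v \<in> ambient k \<Longrightarrow> dotp k u v = 0 \<Longrightarrow> dotp k w v = 0"
  shows "\<exists>a. w = vscale a u"
proof -
  obtain i where i: "i < k" "u i \<noteq> 0" using ambient_nonzero_coord[OF u] by blast
  have "w j * u i = w i * u j" if j: "j < k" for j
  proof -
    define v where "v = (\<lambda>l. (if l = j then u i else 0) - (if l = i then u j else (0::'a)))"
    have v: "v \<in> ambient k" using i j by (auto simp: v_def ambient_def)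
    have dotp_v: "dotp k x v = x j * u i - x i * u j" for x
      using i j by (simp add: dotp_def v_def right_diff_distrib sum_subtractf
          if_distrib[of "(*) _"] cong: if_cong)
    show ?thesis using ann[OF v] by (simp add: dotp_v mult.commute)
  qed
  then have "w j = (w i / u i) * u j" for j
    using i u w by (cases "j < k") (auto simp: ambient_def field_simps)
  then show ?thesis unfolding vscale_def by blast
qed

lemma floor_log_Suc_eq_iff: "floor_log (Suc p) = j \<longleftrightarrow> p \<in> {2^j - 1 ..< 2^Suc j - 1}"
proof -
  have "floor_log (Suc p) = j \<longleftrightarrow> 2^j \<le> Suc p \<and> Suc p < 2 * 2^j"
    using floor_log_exp2_le[of "Suc p"] floor_log_exp2_gt[of "Suc p"] floor_log_eqI[of "Suc p" j]
    by auto
  also have "\<dots> \<longleftrightarrow> p \<in> {2^j - 1 ..< 2^Suc j - 1}"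
    using one_le_power[of "2::nat" j] by auto
  finally show ?thesis .
qed

lemma floor_log_Suc_less: "p < 2^N - 1 \<Longrightarrow> floor_log (Suc p) < N"
proof -
  assume "p < 2^N - 1"
  have "2 ^ floor_log (Suc p) \<le> Suc p" by (rule floor_log_exp2_le) simp
  also have "\<dots> < 2^N" using \<open>p < 2^N - 1\<close> by simp
  finally show ?thesis by (rule power_less_imp_less_exp[rotated]) simp
qed

lemma hweight_repeat_blocks:
  fixes h :: "nat \<Rightarrow> 'a::zero"
  shows "hweight (2^N - 1) (\<lambda>p. if p < 2^N - 1 then h (floor_log (Suc p)) else 0)
    = set_encode {j. j < N \<and> h j \<noteq> 0}"
proof -
  let ?B = "\<lambda>j. {2^j - 1 ..< 2^Suc j - 1 :: nat}"
  let ?J = "{j. j < N \<and> h j \<noteq> 0}"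
  have B_sub: "?B j \<subseteq> {..<2^N - 1}" if "j < N" for j
    using that power_increasing[of "Suc j" N "2::nat"] by auto
  have B_disj: "?B i \<inter> ?B j = {}" if "i \<noteq> j" for i j
    using that by (metis disjoint_iff floor_log_Suc_eq_iff)
  have "{p. p < 2^N - 1 \<and> h (floor_log (Suc p)) \<noteq> 0} = (\<Union>j\<in>?J. ?B j)"
  proof (intro set_eqI iffI)
    fix p assume "p \<in> {p. p < 2^N - 1 \<and> h (floor_log (Suc p)) \<noteq> 0}"
    then show "p \<in> (\<Union>j\<in>?J. ?B j)"
      using floor_log_Suc_less floor_log_Suc_eq_iff[of p "floor_log (Suc p)"] by auto
  next
    fix p assume "p \<in> (\<Union>j\<in>?J. ?B j)"
    then obtain j where j: "j \<in> ?J" "p \<in> ?B j" by blast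
    then have "p < 2^N - 1" using B_sub by blast
    moreover have "floor_log (Suc p) = j" using j(2) floor_log_Suc_eq_iff by blast
    ultimately show "p \<in> {p. p < 2^N - 1 \<and> h (floor_log (Suc p)) \<noteq> 0}"
      using j(1) by simp
  qed
  then have "hweight (2^N - 1) (\<lambda>p. if p < 2^N - 1 then h (floor_log (Suc p)) else 0)
      = card (\<Union>j\<in>?J. ?B j)"
    by (simp add: hweight_def cong: conj_cong)
  also have "\<dots> = (\<Sum>j\<in>?J. card (?B j))"
    by (rule card_UN_disjoint) (simp, simp, use B_disj in blast)
  also have "\<dots> = set_encode ?J"
    by (simp add: set_encode_def)
  finally show ?thesis .
qed

lemma card_eq_card_image_mult_fibers:
  assumes "finite A" and fibers: "\<And>x. x \<in> A \<Longrightarrow> card {y \<in> A. f y = f x} = m"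
  shows "card A = card (f ` A) * m"
proof -
  have "card A = (\<Sum>b\<in>f ` A. card {a \<in> A. f a = b})"
    using sum.image_gen[OF \<open>finite A\<close>, of "\<lambda>_. 1::nat" f] by (simp flip: card_eq_sum)
  also have "\<dots> = (\<Sum>b\<in>f ` A. m)"
    using fibers by (intro sum.cong) auto
  finally show ?thesis by simp
qed

lemma card_nonzero_multiples:
  fixes u :: "nat \<Rightarrow> 'a::{field,finite}"
  assumes "u \<noteq> 0"
  shows "card ((\<lambda>a. vscale a u) ` (UNIV - {0})) = card (UNIV :: 'a set) - 1"
proof -
  obtain i where "u i \<noteq> 0" using assms by (auto simp: fun_eq_iff)
  then have "inj (\<lambda>a. vscale a u)" by (auto simp: inj_on_def vscale_def fun_eq_iff)
  then show ?thesis by (simp add: card_image[OF inj_on_subset] card_Diff_singleton)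
qed

(* Coordinate p < 2^N - 1 lies in block floor_log (p + 1), and block j consists of the
   2^j coordinates 2^j - 1, ..., 2^(j+1) - 2, all carrying the column g j. *)
locale mws_construction =
  fixes k N :: nat and g :: "nat \<Rightarrow> nat \<Rightarrow> 'a::{field,finite}"
  assumes g_image: "g ` {..<N} = ambient k - {0}"
begin

definition n :: nat where "n = 2^N - 1"

definition cw :: "(nat \<Rightarrow> 'a) \<Rightarrow> nat \<Rightarrow> 'a" where
  "cw u = (\<lambda>p. if p < n then dotp k u (g (floor_log (Suc p))) else 0)"

definition C :: "(nat \<Rightarrow> 'a) set" where "C = cw ` ambient k"

lemma cw_first_of_block: "j < N \<Longrightarrow> cw u (2^j - 1) = dotp k u (g j)"
proof -
  assume "j < N"
  then have "(2::nat)^j < 2^N" by (simp add: power_strict_increasing)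
  then have "2^j - 1 < n" using one_le_power[of "2::nat" j] unfolding n_def by arith
  then show ?thesis using one_le_power[of "2::nat" j] by (simp add: cw_def)
qed

lemma linear_cw: "Vector_Spaces.linear vscale vscale cw"
  using vector_space_vscale
  by (auto simp: Vector_Spaces.linear_iff cw_def dotp_def vscale_def fun_eq_iff sum.distrib
      sum_distrib_left distrib_right mult.assoc)

lemma inj_on_cw: "inj_on cw (ambient k)"
proof (rule inj_onI, rule ext)
  fix u w i assume u: "u \<in> ambient k" and w: "w \<in> ambient k" and eq: "cw u = cw w"
  show "u i = w i"
  proof (cases "i < k")
    case True
    then have "unit_vec i \<in> g ` {..<N}"
      unfolding g_image by (rule unit_vec_in_ambient)
    then obtain j where j: "j < N" "g j = unit_vec i" by auto
    have "cw x (2^j - 1) = x i" for x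
      using cw_first_of_block[OF j(1), of x] by (simp add: j(2) dotp_unit_vec_right[OF True])
    then show ?thesis using eq by metis
  next
    case False
    then show ?thesis using u w by (simp add: ambient_def)
  qed
qed

lemma C_subset_ambient: "C \<subseteq> ambient n"
  by (auto simp: C_def cw_def ambient_def)

lemma subspace_C: "module.subspace vscale C"
  unfolding C_def
  by (rule module_hom.subspace_image[OF linear_cw[unfolded linear_iff_module_hom] subspace_ambient])

lemma dim_C: "vector_space.dim vscale C = k"
proof -
  interpret vector_space "vscale :: 'a \<Rightarrow> (nat \<Rightarrow> 'a) \<Rightarrow> _" by (rule vector_space_vscale)
  show ?thesis
    unfolding C_def using dim_image_eq_if_inj_on[OF linear_cw subspace_ambient inj_on_cw] dim_ambient
    by simp
qed

lemma C_nondegenerate: "\<forall>p<n. \<exists>c\<in>C. c p \<noteq> 0"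
proof (intro allI impI)
  fix p assume p: "p < n"
  then have "g (floor_log (Suc p)) \<in> ambient k - {0}"
    using g_image floor_log_Suc_less by (auto simp: n_def)
  then obtain i where i: "i < k" "g (floor_log (Suc p)) i \<noteq> 0"
    using ambient_nonzero_coord by blast
  have "cw (unit_vec i) p \<noteq> 0" using p i by (simp add: cw_def dotp_unit_vec_left)
  moreover have "cw (unit_vec i) \<in> C"
    using unit_vec_in_ambient[OF i(1)] unfolding C_def by blast
  ultimately show "\<exists>c\<in>C. c p \<noteq> 0" by blast
qed

lemma hweight_cw: "hweight n (cw u) = set_encode {j. j < N \<and> dotp k u (g j) \<noteq> 0}"
  unfolding cw_def n_def by (rule hweight_repeat_blocks)

lemma hweight_cw_eq_iff:
  assumes u: "u \<in> ambient k" "u \<noteq> 0" and w: "w \<in> ambient k" "w \<noteq> 0"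
  shows "hweight n (cw w) = hweight n (cw u) \<longleftrightarrow> (\<exists>a. a \<noteq> 0 \<and> w = vscale a u)"
proof
  assume "hweight n (cw w) = hweight n (cw u)"
  then have same_zeros:
    "{j. j < N \<and> dotp k w (g j) \<noteq> 0} = {j. j < N \<and> dotp k u (g j) \<noteq> 0}"
    by (simp add: hweight_cw set_encode_eq)
  have "dotp k w v = 0" if "v \<in> ambient k" "dotp k u v = 0" for v
  proof (cases "v = 0")
    case True
    then show ?thesis by (simp add: dotp_def)
  next
    case False
    then have "v \<in> g ` {..<N}" using that(1) g_image by blast
    then obtain j where "j < N" "g j = v" by auto
    then show ?thesis using same_zeros that(2) by blast
  qed
  then obtain a where a: "w = vscale a u" using proportional_if_annihilator_subset[OF u w(1)] by blast
  then have "a \<noteq> 0" using w(2) by (auto simp: vscale_def fun_eq_iff)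
  then show "\<exists>a. a \<noteq> 0 \<and> w = vscale a u" using a by blast
next
  assume "\<exists>a. a \<noteq> 0 \<and> w = vscale a u"
  then obtain a where "a \<noteq> 0" "w = vscale a u" by blast
  then show "hweight n (cw w) = hweight n (cw u)"
    by (simp add: hweight_cw dotp_def vscale_def mult.assoc flip: sum_distrib_left)
qed

lemma card_weight_set:
  "card (weight_set n C) * (card (UNIV :: 'a set) - 1) = card (UNIV :: 'a set) ^ k - 1"
proof -
  let ?A = "ambient k - {0 :: nat \<Rightarrow> 'a}"
  let ?wt = "\<lambda>u. hweight n (cw u)"
  have "(0 :: nat \<Rightarrow> 'a) \<in> ambient k" by (simp add: ambient_def)
  moreover have "cw 0 = 0" by (simp add: cw_def dotp_def fun_eq_iff)
  ultimately have "C - {0} = cw ` ?A"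
    using inj_on_image_set_diff[OF inj_on_cw, of "ambient k" "{0}"] by (simp add: C_def)
  then have "weight_set n C = ?wt ` ?A" by (simp add: weight_set_def image_image)
  moreover have "card ?A = card (?wt ` ?A) * (card (UNIV :: 'a set) - 1)"
  proof (rule card_eq_card_image_mult_fibers)
    show "finite ?A" using finite_ambient by blast
    fix u assume u: "u \<in> ?A"
    have "{w \<in> ?A. ?wt w = ?wt u} = (\<lambda>a. vscale a u) ` (UNIV - {0})"
    proof (intro set_eqI iffI)
      fix w assume "w \<in> {w \<in> ?A. ?wt w = ?wt u}"
      then show "w \<in> (\<lambda>a. vscale a u) ` (UNIV - {0})" using u hweight_cw_eq_iff by blast
    next
      fix w assume "w \<in> (\<lambda>a. vscale a u) ` (UNIV - {0})"
      then obtain a where a: "a \<noteq> 0" "w = vscale a u" by blast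
      then have "w \<in> ?A" using u by (auto simp: ambient_def vscale_def fun_eq_iff)
      then show "w \<in> {w \<in> ?A. ?wt w = ?wt u}" using a u hweight_cw_eq_iff by blast
    qed
    then show "card {w \<in> ?A. ?wt w = ?wt u} = card (UNIV :: 'a set) - 1"
      using u card_nonzero_multiples[of u] by simp
  qed
  moreover have "card ?A = card (UNIV :: 'a set) ^ k - 1"
    using \<open>(0 :: nat \<Rightarrow> 'a) \<in> ambient k\<close>
    by (simp add: card_Diff_singleton finite_ambient card_ambient)
  ultimately show ?thesis by simp
qed

end

theorem mainTheorem2:
  assumes "card (UNIV :: ('a::{field,finite}) set) \<ge> 3" and "k \<ge> 1"
  shows "\<exists>n::nat. n > 0 \<and> (\<exists>C :: (nat \<Rightarrow> 'a) set. is_MWS n k C)"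
proof -
  let ?q = "card (UNIV :: 'a set)"
  obtain N and g :: "nat \<Rightarrow> nat \<Rightarrow> 'a" where g: "g ` {..<N} = ambient k - {0}"
    using finite_imp_nat_seg_image_inj_on[of "ambient k - {0}"] finite_ambient
    by (metis finite_Diff lessThan_def)
  interpret mws_construction k N g by unfold_locales (fact g)
  have "unit_vec 0 \<in> g ` {..<N}"
    using unit_vec_in_ambient[of 0 k] assms(2) by (simp add: g)
  then have "N > 0" by auto
  then have "n > 0" using one_less_power[of "2::nat" N] by (simp add: n_def)
  \<comment> \<open>The construction works over every finite field; the bound on q only yields q \<noteq> 1.\<close>
  have "?q - 1 \<noteq> 0" using assms(1) by simp
  then have "card (weight_set n C) = (?q ^ k - 1) div (?q - 1)"
    using card_weight_set by (metis nonzero_mult_div_cancel_right)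
  then have "card (weight_set n C) = theta ?q (k - 1)"
    using assms(2) by (simp add: theta_def)
  then have "is_MWS n k C"
    unfolding is_MWS_def is_code_def
    using C_subset_ambient subspace_C dim_C C_nondegenerate by simp
  with \<open>n > 0\<close> show ?thesis by blast
qed

end
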